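(* Let $\vec{s}(x,y)=(x,y,\zeta(x,y))^{\mathsf T}$ be a smooth Monge-patch parametrization of a surface over the image plane, and fix an image point at which the slant satisfies $0\le\sigma<\pi/2$. Let $\mathcal{D}\vec{s}=U\Sigma V^{\mathsf T}$ be the singular value decomposition of the $3\times 2$ Jacobian $\mathcal{D}\vec{s}$, where $U$ is $3\times 2$ with orthonormal columns spanning the tangent plane (first column: the unit tangent vector in the direction of maximal slant, i.e. the tilt direction lifted to the surface), $\Sigma=\begin{pmatrix}\frac{1}{\cos\sigma}&0\\0&1\end{pmatrix}$, and $V$ is the $2\times 2$ rotation matrix by the tilt angle $\tau$ (its first column is the tilt direction in the image). Let $W$ be the $2\times 2$ orthogonal matrix whose columns are the principal directions expressed in the orthonormal tangent-plane basis given by the columns of $U$, and $K=\operatorname{diag}(\kappa_1,\kappa_2)$ the diagonal matrix of the corresponding principal curvatures, with $\kappa_1\kappa_2\neq 0$. Then the $3\times 2$ Jacobian $\mathcal{D}\vec{n}$ of the unit normal field $\vec{n}$ (as a function of image position) and its Moore–Penrose pseudo-inverse satisfy $$\mathcal{D}\vec{n}=U W K W^{\mathsf T}\Sigma V^{\mathsf T},\qquad \mathcal{D}\vec{n}^{+}=V\Sigma^{-1}WK^{-1}W^{\mathsf T}U^{\mathsf T}.$$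
   Context: The unit normal is $\vec{n}(x,y)=\frac{\vec{s}_x\times\vec{s}_y}{\|\vec{s}_x\times\vec{s}_y\|}$, viewed as a map from the image plane to the unit sphere; $\mathcal{D}\vec{n}$ is its $3\times2$ Jacobian with respect to image coordinates $(x,y)$. The Gauss map $\tilde{\vec{n}}$ sends a surface point to its unit normal; its differential $\mathcal{D}\tilde{\vec{n}}$ (shape operator) is a self-adjoint linear map of the tangent plane; the principal curvatures $\kappa_1,\kappa_2$ are its eigenvalues and the principal directions are its orthonormal eigenvectors. Slant $\sigma$ is the angle between the surface normal and the viewing ($z$) axis; tilt $\tau$ is the image direction of the gradient of $\zeta$. $A^{+}$ denotes the Moore–Penrose pseudo-inverse. *)

theory Defs
  imports "HOL-Analysis.Analysis"
begin

definition partial_deriv :: "2 \<Rightarrow> (real^2 \<Rightarrow> real) \<Rightarrow> real^2 \<Rightarrow> real" where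
  "partial_deriv i f x = deriv (\<lambda>t. f (x + t *\<^sub>R axis i 1)) 0"

definition smooth_on :: "(real^2) set \<Rightarrow> (real^2 \<Rightarrow> real) \<Rightarrow> bool" where
  "smooth_on S f \<longleftrightarrow>
     (\<forall>js. continuous_on S (foldr partial_deriv js f) \<and>
        (\<forall>x\<in>S. \<forall>i. (\<lambda>t. foldr partial_deriv js f (x + t *\<^sub>R axis i 1)) differentiable (at 0)))"

definition monge :: "(real^2 \<Rightarrow> real) \<Rightarrow> real^2 \<Rightarrow> real^3" where
  "monge \<zeta> p = vector [p$1, p$2, \<zeta> p]"

definition Ds :: "(real^2 \<Rightarrow> real) \<Rightarrow> real^2 \<Rightarrow> real^2^3" where
  "Ds \<zeta> p = matrix (frechet_derivative (monge \<zeta>) (at p))"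

definition unit_normal :: "(real^2 \<Rightarrow> real) \<Rightarrow> real^2 \<Rightarrow> real^3" where
  "unit_normal \<zeta> p =
     (let c = cross3 (column 1 (Ds \<zeta> p)) (column 2 (Ds \<zeta> p)) in (1 / norm c) *\<^sub>R c)"

definition Dn :: "(real^2 \<Rightarrow> real) \<Rightarrow> real^2 \<Rightarrow> real^2^3" where
  "Dn \<zeta> p = matrix (frechet_derivative (unit_normal \<zeta>) (at p))"

text \<open>Shape operator: the differential of the Gauss map acting on tangent vectors;
  by the chain rule it sends the tangent vector Ds v to Dn v.\<close>
definition shape_op :: "(real^2 \<Rightarrow> real) \<Rightarrow> real^2 \<Rightarrow> real^3 \<Rightarrow> real^3" where
  "shape_op \<zeta> p e = Dn \<zeta> p *v (THE v. Ds \<zeta> p *v v = e)"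

definition slant :: "(real^2 \<Rightarrow> real) \<Rightarrow> real^2 \<Rightarrow> real" where
  "slant \<zeta> p = arccos (unit_normal \<zeta> p \<bullet> axis 3 1)"

definition img_grad :: "(real^2 \<Rightarrow> real) \<Rightarrow> real^2 \<Rightarrow> real^2" where
  "img_grad \<zeta> p = (\<chi> i. frechet_derivative \<zeta> (at p) (axis i 1))"

text \<open>tau is a tilt angle at p: (cos tau, sin tau) is the image direction of the gradient
  (any tau if the gradient vanishes).\<close>
definition is_tilt :: "(real^2 \<Rightarrow> real) \<Rightarrow> real^2 \<Rightarrow> real \<Rightarrow> bool" where
  "is_tilt \<zeta> p \<tau> \<longleftrightarrow> img_grad \<zeta> p = norm (img_grad \<zeta> p) *\<^sub>R vector [cos \<tau>, sin \<tau>]"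

definition rot2 :: "real \<Rightarrow> real^2^2" where
  "rot2 \<tau> = vector [vector [cos \<tau>, - sin \<tau>], vector [sin \<tau>, cos \<tau>]]"

definition diag2 :: "real \<Rightarrow> real \<Rightarrow> real^2^2" where
  "diag2 a b = vector [vector [a, 0], vector [0, b]]"

definition mp_pinv :: "real^'n^'m \<Rightarrow> real^'m^'n" where
  "mp_pinv A = (THE X. A ** X ** A = A \<and> X ** A ** X = X \<and>
                       transpose (A ** X) = A ** X \<and> transpose (X ** A) = X ** A)"

end

theory Submission
  imports Defs
begin

text \<open>Everything is linear algebra at one point. Writing \<open>\<D>s = U M\<close> with \<open>M = \<Sigma> V\<^sup>T\<close>
  invertible, the unique preimage under \<open>\<D>s\<close> of a tangent vector \<open>U w\<close> is \<open>M\<^sup>-\<^sup>1 w\<close>, so the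
  eigenvector equations of the shape operator say \<open>\<D>n M\<^sup>-\<^sup>1 W = U W K\<close>; solving gives
  \<open>\<D>n = U N\<close> with \<open>N = W K W\<^sup>T M\<close> invertible. For a matrix \<open>U N\<close> with orthonormal columns
  \<open>U\<close> and invertible \<open>N\<close>, the left inverse \<open>N\<^sup>-\<^sup>1 U\<^sup>T\<close> satisfies the Penrose equations,
  and these determine the pseudo-inverse uniquely.\<close>

lemma matrix_mul_cancel_left:
  fixes A :: "'a::comm_semiring_1^'n^'m"
  shows "A ** B = mat 1 \<Longrightarrow> A ** (B ** C) = C"
  by (metis matrix_mul_assoc matrix_mul_lid)

lemma diag2_mult [simp]: "diag2 a b ** diag2 c d = diag2 (a * c) (b * d)"
  by (simp add: diag2_def matrix_matrix_mult_def vec_eq_iff forall_2 sum_2)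

lemma diag2_1_1 [simp]: "diag2 1 1 = mat 1"
  by (simp add: diag2_def mat_def vec_eq_iff forall_2)

lemma matrix_inv_eqI:
  fixes A :: "'a::comm_semiring_1^'n^'m"
  assumes "A ** B = mat 1" and "B ** A = mat 1"
  shows "matrix_inv A = B"
proof -
  have "\<exists>A'. A ** A' = mat 1 \<and> A' ** A = mat 1"
    using assms by blast
  then have inv: "matrix_inv A ** A = mat 1"
    unfolding matrix_inv_def by (rule someI2_ex) blast
  have "matrix_inv A = matrix_inv A ** (A ** B)"
    using assms(1) by simp
  also have "\<dots> = B"
    using inv by (simp add: matrix_mul_assoc)
  finally show ?thesis .
qed

lemma matrix_inv_diag2:
  assumes "a \<noteq> 0" and "b \<noteq> 0"
  shows "matrix_inv (diag2 a b) = diag2 (1 / a) (1 / b)"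
  using assms by (intro matrix_inv_eqI) simp_all

lemma orthogonal_matrix_rot2: "orthogonal_matrix (rot2 t)"
  by (simp add: orthogonal_matrix rot2_def transpose_def matrix_matrix_mult_def mat_def
      vec_eq_iff forall_2 sum_2 power2_eq_square[symmetric])

lemma column_matrix_mult: "column j (A ** B) = A *v column j B"
  by (simp add: column_def matrix_matrix_mult_def matrix_vector_mult_def vec_eq_iff)

lemma matrix_mult_diag2_eqI:
  fixes A :: "real^'n^'m" and X :: "real^2^'n" and Y :: "real^2^'m"
  assumes "A *v column 1 X = a *\<^sub>R column 1 Y" and "A *v column 2 X = b *\<^sub>R column 2 Y"
  shows "A ** X = Y ** diag2 a b"
proof -
  have "column j (A ** X) = column j (Y ** diag2 a b)" for j :: 2
    using exhaust_2[of j] assms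
    by (auto simp: column_def matrix_matrix_mult_def matrix_vector_mult_def diag2_def
        vec_eq_iff sum_2)
  then show ?thesis
    by (simp add: column_def vec_eq_iff)
qed

definition penrose_inverse :: "real^'n^'m \<Rightarrow> real^'m^'n \<Rightarrow> bool" where
  "penrose_inverse A X \<longleftrightarrow> A ** X ** A = A \<and> X ** A ** X = X \<and>
     transpose (A ** X) = A ** X \<and> transpose (X ** A) = X ** A"

lemma penrose_inverse_unique:
  assumes X: "penrose_inverse A X" and Y: "penrose_inverse A Y"
  shows "X = Y"
proof -
  have AX: "A ** X = A ** Y"
  proof -
    have "A ** X = A ** Y ** A ** X"
      using Y by (simp add: penrose_inverse_def)
    also have "\<dots> = transpose (A ** Y) ** transpose (A ** X)"
      using X Y by (simp add: penrose_inverse_def matrix_mul_assoc)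
    also have "\<dots> = transpose (A ** X ** A ** Y)"
      by (simp add: matrix_transpose_mul matrix_mul_assoc)
    also have "\<dots> = A ** Y"
      using X Y by (simp add: penrose_inverse_def)
    finally show ?thesis .
  qed
  have XA: "X ** A = Y ** A"
  proof -
    have "X ** A = X ** (A ** Y ** A)"
      using Y by (metis penrose_inverse_def)
    also have "\<dots> = transpose (X ** A) ** transpose (Y ** A)"
      using X Y unfolding penrose_inverse_def by (metis matrix_mul_assoc)
    also have "\<dots> = transpose (Y ** (A ** X ** A))"
      by (simp add: matrix_transpose_mul matrix_mul_assoc)
    also have "\<dots> = Y ** A"
      using X Y by (simp add: penrose_inverse_def)
    finally show ?thesis .
  qed
  have "X = X ** (A ** Y)"
    using X AX unfolding penrose_inverse_def by (metis matrix_mul_assoc)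
  also have "\<dots> = Y"
    using Y XA unfolding penrose_inverse_def by (metis matrix_mul_assoc)
  finally show ?thesis .
qed

lemma mp_pinv_eqI: "penrose_inverse A X \<Longrightarrow> mp_pinv A = X"
  unfolding mp_pinv_def penrose_inverse_def[symmetric]
  by (rule the_equality) (simp_all add: penrose_inverse_unique)

lemma mp_pinv_orthonormal_mult:
  fixes U :: "real^'n^'m" and N :: "real^'n^'n"
  assumes U: "transpose U ** U = mat 1" and "N ** Ni = mat 1" and "Ni ** N = mat 1"
  shows "mp_pinv (U ** N) = Ni ** transpose U"
proof (rule mp_pinv_eqI)
  have left: "Ni ** transpose U ** (U ** N) = mat 1"
    using assms by (simp add: matrix_mul_assoc[symmetric] matrix_mul_cancel_left)
  have "U ** N ** (Ni ** transpose U) = U ** transpose U"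
    using assms by (simp add: matrix_mul_assoc[symmetric] matrix_mul_cancel_left)
  with left U show "penrose_inverse (U ** N) (Ni ** transpose U)"
    by (simp add: penrose_inverse_def matrix_transpose_mul matrix_mul_assoc[symmetric]
        matrix_mul_cancel_left)
qed

lemma the_preimage_orthonormal_mult:
  fixes U :: "real^'n^'m" and M :: "real^'n^'n"
  assumes U: "transpose U ** U = mat 1" and "M ** Mi = mat 1" and "Mi ** M = mat 1"
  shows "(THE v. (U ** M) *v v = U *v w) = Mi *v w"
proof (rule the_equality)
  show "(U ** M) *v (Mi *v w) = U *v w"
    using assms by (simp add: matrix_vector_mul_assoc matrix_mul_assoc[symmetric])
next
  fix v assume "(U ** M) *v v = U *v w"
  then have "(Mi ** transpose U) *v ((U ** M) *v v) = (Mi ** transpose U) *v (U *v w)"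
    by simp
  then show "v = Mi *v w"
    using assms by (simp add: matrix_vector_mul_assoc matrix_mul_assoc[symmetric]
        matrix_mul_cancel_left)
qed

lemma shape_op_orthonormal_frame:
  fixes U :: "real^2^3" and M :: "real^2^2"
  assumes "Ds \<zeta> p = U ** M" and "transpose U ** U = mat 1"
    and "M ** Mi = mat 1" and "Mi ** M = mat 1"
  shows "shape_op \<zeta> p (U *v w) = Dn \<zeta> p *v (Mi *v w)"
  using assms by (simp add: shape_op_def the_preimage_orthonormal_mult)

lemma Dn_principal_frame:
  fixes U :: "real^2^3" and M Mi W :: "real^2^2"
  assumes "Ds \<zeta> p = U ** M" and "transpose U ** U = mat 1"
    and M_inv: "M ** Mi = mat 1" "Mi ** M = mat 1" and "orthogonal_matrix W"
    and "shape_op \<zeta> p (U *v column 1 W) = \<kappa>1 *\<^sub>R (U *v column 1 W)"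
    and "shape_op \<zeta> p (U *v column 2 W) = \<kappa>2 *\<^sub>R (U *v column 2 W)"
  shows "Dn \<zeta> p = U ** (W ** diag2 \<kappa>1 \<kappa>2 ** transpose W ** M)"
proof -
  note shape_op = shape_op_orthonormal_frame[OF assms(1-4)]
  have eigen: "Dn \<zeta> p ** (Mi ** W) = U ** W ** diag2 \<kappa>1 \<kappa>2"
    using assms(6,7) unfolding shape_op
    by (intro matrix_mult_diag2_eqI) (simp_all add: column_matrix_mult matrix_vector_mul_assoc)
  have "W ** transpose W = mat 1"
    using assms(5) by (simp add: orthogonal_matrix_def)
  then have "Dn \<zeta> p = Dn \<zeta> p ** (Mi ** W ** (transpose W ** M))"
    by (simp add: matrix_mul_assoc[symmetric] matrix_mul_cancel_left M_inv)
  also have "\<dots> = Dn \<zeta> p ** (Mi ** W) ** (transpose W ** M)"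
    by (simp add: matrix_mul_assoc)
  also have "\<dots> = U ** (W ** diag2 \<kappa>1 \<kappa>2 ** transpose W ** M)"
    unfolding eigen by (simp add: matrix_mul_assoc)
  finally show ?thesis .
qed

theorem mainTheorem1:
  fixes \<zeta> :: "real^2 \<Rightarrow> real" and S :: "(real^2) set" and p :: "real^2"
    and \<sigma> \<tau> \<kappa>1 \<kappa>2 :: real and U :: "real^2^3" and W V \<Sigma> K :: "real^2^2"
  assumes "open S" and "p \<in> S" and "smooth_on S \<zeta>"
    and "\<sigma> = slant \<zeta> p" and "0 \<le> \<sigma>" and "\<sigma> < pi / 2"
    and "is_tilt \<zeta> p \<tau>" and "V = rot2 \<tau>"
    and "\<Sigma> = diag2 (1 / cos \<sigma>) 1"
    and "transpose U ** U = mat 1"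
    and "Ds \<zeta> p = U ** \<Sigma> ** transpose V"
    and "orthogonal_matrix W"
    and "K = diag2 \<kappa>1 \<kappa>2"
    and "shape_op \<zeta> p (U *v column 1 W) = \<kappa>1 *\<^sub>R (U *v column 1 W)"
    and "shape_op \<zeta> p (U *v column 2 W) = \<kappa>2 *\<^sub>R (U *v column 2 W)"
    and "\<kappa>1 * \<kappa>2 \<noteq> 0"
  shows "Dn \<zeta> p = U ** W ** K ** transpose W ** \<Sigma> ** transpose V \<and>
         mp_pinv (Dn \<zeta> p) = V ** matrix_inv \<Sigma> ** W ** matrix_inv K ** transpose W ** transpose U"
proof -
  have "\<kappa>1 \<noteq> 0" and "\<kappa>2 \<noteq> 0"
    using assms(16) by auto
  then have K_inv: "K ** matrix_inv K = mat 1" "matrix_inv K ** K = mat 1"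
    by (simp_all add: assms(13) matrix_inv_diag2)
  have "cos \<sigma> > 0"
    using assms(5,6) by (intro cos_gt_zero_pi) auto
  then have \<Sigma>_inv: "\<Sigma> ** matrix_inv \<Sigma> = mat 1" "matrix_inv \<Sigma> ** \<Sigma> = mat 1"
    by (simp_all add: assms(9) matrix_inv_diag2)
  have V_orth: "transpose V ** V = mat 1" "V ** transpose V = mat 1"
    using orthogonal_matrix_rot2 by (simp_all add: assms(8) orthogonal_matrix_def)
  have W_orth: "transpose W ** W = mat 1" "W ** transpose W = mat 1"
    using assms(12) by (simp_all add: orthogonal_matrix_def)
  note cancel = K_inv \<Sigma>_inv V_orth W_orth
    K_inv[THEN matrix_mul_cancel_left] \<Sigma>_inv[THEN matrix_mul_cancel_left]
    V_orth[THEN matrix_mul_cancel_left] W_orth[THEN matrix_mul_cancel_left]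
  define M where "M = \<Sigma> ** transpose V"
  define Mi where "Mi = V ** matrix_inv \<Sigma>"
  have "M ** Mi = mat 1" "Mi ** M = mat 1"
    by (simp_all add: M_def Mi_def matrix_mul_assoc[symmetric] cancel)
  moreover have "Ds \<zeta> p = U ** M"
    by (simp add: assms(11) M_def matrix_mul_assoc)
  ultimately have Dn: "Dn \<zeta> p = U ** (W ** K ** transpose W ** M)"
    using Dn_principal_frame assms(10,12-15) by blast
  define Ni where "Ni = Mi ** W ** matrix_inv K ** transpose W"
  have "(W ** K ** transpose W ** M) ** Ni = mat 1" "Ni ** (W ** K ** transpose W ** M) = mat 1"
    by (simp_all add: Ni_def M_def Mi_def matrix_mul_assoc[symmetric] cancel)
  from mp_pinv_orthonormal_mult[OF assms(10) this] show ?thesis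
    by (simp add: Dn Ni_def Mi_def M_def matrix_mul_assoc)
qed

end
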